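(* Let $(A,B,C,D)$ be reduced words in $a^{\pm1},b^{\pm1}$ defining a local $\mathrm{Aut}(F_3)$ braid representation $\Theta$. If $B$ contains no letter $a^{\pm1}$, then $\Theta$ is of type $(T)$ or $(T')$, i.e. $(A,B,C,D)$ is equivalent up to natural symmetries to $(a,b,a,b)$ or to $(a,b^{-1},a^{-1},b)$.
   Context: $F_2$ is free on $a,b$; $F_3$ is free on $x_1,x_2,x_3$; $B_3$ has standard generators $\sigma_1,\sigma_2$. For a word $W$ in $a^{\pm1},b^{\pm1}$, $W(U,V)$ denotes substitution of $U$ for $a$ and $V$ for $b$. A quadruple $(A,B,C,D)$ of reduced words defines a local $\mathrm{Aut}(F_3)$ braid representation if $\tau:a\mapsto A,b\mapsto B$ and $\kappa:a\mapsto C,b\mapsto D$ are automorphisms of $F_2$ and the automorphisms $s_1: x_1\mapsto A(x_1,x_2),\ x_2\mapsto B(x_1,x_2),\ x_3\mapsto x_3$ and $s_2: x_1\mapsto x_1,\ x_2\mapsto C(x_2,x_3),\ x_3\mapsto D(x_2,x_3)$ of $F_3$ satisfy $s_1s_2s_1=s_2s_1s_2$; $\Theta$ is the resulting representation $\sigma_i\mapsto s_i$. Natural symmetries: Inverse replaces $(A,B,C,D)$ by the reduced words of $\tau^{-1}(a),\tau^{-1}(b),\kappa^{-1}(a),\kappa^{-1}(b)$; Swap replaces it by $(D^{\sigma},C^{\sigma},B^{\sigma},A^{\sigma})$ with $W^{\sigma}$ obtained by interchanging letters $a$ and $b$; Backward replaces it by the words read backwards. Equivalence up to natural symmetries means related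 by a composition of these. *)

theory Defs
  imports Main
begin

text \<open>A letter is a pair
  (g, e) with e = False meaning the generator g and e = True meaning its inverse.
  For F_2: a = 0, b = 1.  For F_3: x1 = 0, x2 = 1, x3 = 2.\<close>

type_synonym word = "(nat \<times> bool) list"

fun red :: "word \<Rightarrow> word" where
  "red [] = []"
| "red (x # xs) = (case red xs of
      [] \<Rightarrow> [x]
    | y # ys \<Rightarrow> (if fst y = fst x \<and> snd y \<noteq> snd x then ys else x # y # ys))"

fun reduced :: "word \<Rightarrow> bool" where
  "reduced [] = True"
| "reduced [x] = True"
| "reduced (x # y # ys) = (\<not> (fst x = fst y \<and> snd x \<noteq> snd y) \<and> reduced (y # ys))"

definition words :: "nat \<Rightarrow> word set" where
  "words n = {w. reduced w \<and> (\<forall>l\<in>set w. fst l < n)}"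

definition winv :: "word \<Rightarrow> word" where
  "winv w = rev (map (\<lambda>(g, e). (g, \<not> e)) w)"

text \<open>Substitution W(f 0, f 1, ...), freely reduced: the endomorphism sending
  generator g to f g.\<close>
definition subst :: "(nat \<Rightarrow> word) \<Rightarrow> word \<Rightarrow> word" where
  "subst f w = red (concat (map (\<lambda>(g, e). if e then winv (f g) else f g) w))"

definition sub2 :: "word \<Rightarrow> word \<Rightarrow> nat \<Rightarrow> word" where
  "sub2 U V = (\<lambda>g. if g = 0 then U else V)"

definition is_aut2 :: "word \<Rightarrow> word \<Rightarrow> bool" where
  "is_aut2 U V \<longleftrightarrow> bij_betw (subst (sub2 U V)) (words 2) (words 2)"

definition aut2_inv :: "word \<Rightarrow> word \<Rightarrow> nat \<Rightarrow> word" where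
  "aut2_inv U V g = the_inv_into (words 2) (subst (sub2 U V)) [(g, False)]"

definition shift :: "word \<Rightarrow> word" where
  "shift w = map (\<lambda>(g, e). (g + 1, e)) w"

definition s1 :: "word \<Rightarrow> word \<Rightarrow> nat \<Rightarrow> word" where
  "s1 A B = (\<lambda>g. if g = 0 then A else if g = 1 then B else [(2, False)])"

text \<open>s_2: x1 \<mapsto> x1, x2 \<mapsto> C(x2,x3), x3 \<mapsto> D(x2,x3).\<close>
definition s2 :: "word \<Rightarrow> word \<Rightarrow> nat \<Rightarrow> word" where
  "s2 C D = (\<lambda>g. if g = 0 then [(0, False)] else if g = 1 then shift C else shift D)"

definition local_braid_rep :: "word \<Rightarrow> word \<Rightarrow> word \<Rightarrow> word \<Rightarrow> bool" where
  "local_braid_rep A B C D \<longleftrightarrow>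
     A \<in> words 2 \<and> B \<in> words 2 \<and> C \<in> words 2 \<and> D \<in> words 2 \<and>
     is_aut2 A B \<and> is_aut2 C D \<and>
     (\<forall>w \<in> words 3.
        subst (s1 A B) (subst (s2 C D) (subst (s1 A B) w)) =
        subst (s2 C D) (subst (s1 A B) (subst (s2 C D) w)))"

definition swapab :: "word \<Rightarrow> word" where
  "swapab w = map (\<lambda>(g, e). (if g = 0 then 1 else 0, e)) w"

type_synonym quad = "word \<times> word \<times> word \<times> word"

inductive sym_step :: "quad \<Rightarrow> quad \<Rightarrow> bool" where
  inverse: "is_aut2 A B \<Longrightarrow> is_aut2 C D \<Longrightarrow>
     sym_step (A, B, C, D) (aut2_inv A B 0, aut2_inv A B 1, aut2_inv C D 0, aut2_inv C D 1)"
| swap: "sym_step (A, B, C, D) (swapab D, swapab C, swapab B, swapab A)"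
| backward: "sym_step (A, B, C, D) (rev A, rev B, rev C, rev D)"

definition equiv_nat_sym :: "quad \<Rightarrow> quad \<Rightarrow> bool" where
  "equiv_nat_sym = sym_step\<^sup>*\<^sup>*"

end

theory Submission
  imports Defs
begin

text \<open>Since \<open>B\<close> is primitive and involves only \<open>b\<close>, it is \<open>b\<^sup>\<plusminus>\<^sup>1\<close>. On the subgroup
  \<open>\<langle>x\<^sub>2, x\<^sub>3\<rangle>\<close> the braid relation then reads \<open>\<beta>\<kappa>\<beta> = \<kappa>\<beta>\<kappa>\<close>, where \<open>\<beta>\<close> is the identity or
  \<open>a \<mapsto> a\<^sup>-\<^sup>1\<close>. In the first case \<open>\<kappa>\<close> is idempotent, hence the identity. In the second,
  \<open>\<kappa>\<close> is conjugate to \<open>\<beta>\<close>, so \<open>\<kappa>\<^sup>2 = 1\<close> and \<open>(\<beta>\<kappa>)\<^sup>3 = 1\<close>; on the abelianization this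
  forces \<open>\<kappa> = diag(-1, 1)\<close>, so \<open>\<beta>\<kappa>\<close> is a periodic automorphism acting trivially on
  homology. Comparing Magnus expansions degree by degree, each application of such an
  automorphism adds the same top-degree deviation, which periodicity forces to vanish; so
  \<open>\<beta>\<kappa> = 1\<close> and \<open>\<kappa> = \<beta>\<close>. With \<open>C\<close> known, the same argument on \<open>\<langle>x\<^sub>1, x\<^sub>2\<rangle>\<close> determines
  \<open>A\<close>. The quadruple is therefore literally \<open>(a, b, a, b)\<close> or \<open>(a, b\<^sup>-\<^sup>1, a\<^sup>-\<^sup>1, b)\<close>.\<close>

section \<open>Free reduction\<close>

abbreviation gen :: "nat \<Rightarrow> word" where "gen g \<equiv> [(g, False)]"
abbreviation gen_inv :: "nat \<Rightarrow> word" where "gen_inv g \<equiv> [(g, True)]"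

definition cancels :: "nat \<times> bool \<Rightarrow> nat \<times> bool \<Rightarrow> bool" where
  "cancels x y \<longleftrightarrow> fst x = fst y \<and> snd x \<noteq> snd y"

definition cons_red :: "nat \<times> bool \<Rightarrow> word \<Rightarrow> word" where
  "cons_red x r = (case r of [] \<Rightarrow> [x] | y # ys \<Rightarrow> if cancels x y then ys else x # y # ys)"

lemma red_Cons: "red (x # xs) = cons_red x (red xs)"
  by (cases "red xs") (auto simp: cons_red_def cancels_def)

declare red.simps(2)[simp del]

lemma reduced_Cons_Cons [simp]: "reduced (x # y # ys) \<longleftrightarrow> \<not> cancels x y \<and> reduced (y # ys)"
  by (simp add: cancels_def)

declare reduced.simps(3)[simp del]

lemma reduced_ConsD: "reduced (x # xs) \<Longrightarrow> reduced xs"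
  by (cases xs) auto

lemma reduced_append:
  "reduced (u @ v) \<longleftrightarrow> reduced u \<and> reduced v \<and> (u = [] \<or> v = [] \<or> \<not> cancels (last u) (hd v))"
proof (induction u)
  case (Cons x u)
  then show ?case by (cases u; cases v) auto
qed simp

lemma cancels_sym: "cancels x y \<Longrightarrow> cancels y x"
  by (auto simp: cancels_def)

lemma cancels_unique: "cancels x y \<Longrightarrow> cancels x z \<Longrightarrow> y = z"
  by (cases x; cases y; cases z) (auto simp: cancels_def)

lemma reduced_red: "reduced (red w)"
  by (induction w) (auto simp: red_Cons cons_red_def dest: reduced_ConsD split: list.splits)

lemma red_reduced: "reduced w \<Longrightarrow> red w = w"
  by (induction w rule: reduced.induct) (auto simp: red_Cons cons_red_def)

lemma red_red [simp]: "red (red w) = red w"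
  by (rule red_reduced[OF reduced_red])

lemma red_single [simp]: "red [x] = [x]"
  by (simp add: red_Cons cons_red_def)

lemma set_red: "set (red w) \<subseteq> set w"
  by (induction w) (auto simp: red_Cons cons_red_def split: list.splits)

lemma cons_red_reduced: "reduced (x # r) \<Longrightarrow> cons_red x r = x # r"
  by (cases r) (auto simp: cons_red_def)

lemma red_Cons_Cons_cancel: "cancels x y \<Longrightarrow> red (x # y # l) = red l"
proof -
  assume xy: "cancels x y"
  show ?thesis
  proof (cases "red l")
    case Nil
    then show ?thesis using xy by (simp add: red_Cons cons_red_def)
  next
    case (Cons z zs)
    show ?thesis
    proof (cases "cancels y z")
      case True
      with xy have "z = x" by (metis cancels_sym cancels_unique)
      with Cons have "cons_red x zs = z # zs"
        using reduced_red[of l] by (simp add: cons_red_reduced)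
      with Cons True show ?thesis by (simp add: red_Cons cons_red_def)
    next
      case False
      with Cons xy show ?thesis by (simp add: red_Cons cons_red_def)
    qed
  qed
qed

lemma red_append_red_right: "red (u @ v) = red (u @ red v)"
  by (induction u) (simp_all add: red_Cons)

lemma red_append_red_left: "red (u @ v) = red (red u @ v)"
proof (induction u)
  case Nil
  then show ?case using red_append_red_right[of "[]"] by simp
next
  case (Cons x u)
  have "red (x # u @ v) = red (cons_red x (red u) @ v)"
  proof (cases "red u")
    case (Cons y ys)
    then show ?thesis
      using Cons.IH red_Cons_Cons_cancel[of x y "ys @ v"] by (auto simp: red_Cons cons_red_def)
  qed (use Cons.IH in \<open>simp add: red_Cons cons_red_def\<close>)
  then show ?case by (simp add: red_Cons)
qed

lemma red_append_red: "red (u @ v) = red (red u @ red v)"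
  by (metis red_append_red_left red_append_red_right)

lemma red_append_Nil_right: "red v = [] \<Longrightarrow> red (u @ v) = red u"
  by (metis append_Nil2 red_append_red_right)

lemma red_append_Nil_left: "red u = [] \<Longrightarrow> red (u @ v) = red v"
  by (metis append_Nil red_append_red_left)

definition inv_letter :: "nat \<times> bool \<Rightarrow> nat \<times> bool" where
  "inv_letter x = (fst x, \<not> snd x)"

lemma winv_eq: "winv w = rev (map inv_letter w)"
  by (simp add: winv_def inv_letter_def case_prod_beta')

lemma winv_Nil [simp]: "winv [] = []"
  and winv_append [simp]: "winv (u @ v) = winv v @ winv u"
  and winv_Cons: "winv (x # w) = winv w @ [inv_letter x]"
  and winv_winv [simp]: "winv (winv w) = w"
  by (simp_all add: winv_eq rev_map inv_letter_def comp_def)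

lemma red_append_winv: "red (w @ winv w) = []"
proof (induction w)
  case (Cons x w)
  have "red ((w @ winv w) @ [inv_letter x]) = [inv_letter x]"
    using red_append_red_left[of "w @ winv w"] Cons.IH by simp
  then have "red (x # (w @ winv w) @ [inv_letter x]) = []"
    by (simp add: red_Cons cons_red_def cancels_def inv_letter_def)
  then show ?case by (simp add: winv_Cons)
qed simp

lemma red_winv_append: "red (winv w @ w) = []"
  using red_append_winv[of "winv w"] by simp

lemma reduced_winv: "reduced w \<Longrightarrow> reduced (winv w)"
proof (induction w)
  case (Cons x w)
  then show ?case
    by (cases w) (auto simp: winv_Cons reduced_append cancels_def inv_letter_def dest: reduced_ConsD)
qed simp

lemma red_winv: "red (winv w) = winv (red w)"
proof -
  have "red (w @ winv (red w)) = []"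
    by (metis red_append_red_left red_append_winv)
  then have "red (winv w) = red ((winv w @ w) @ winv (red w))"
    using red_append_Nil_right[of "w @ winv (red w)" "winv w"] by simp
  also have "\<dots> = red (winv (red w))"
    using red_append_Nil_left[OF red_winv_append] by simp
  also have "\<dots> = winv (red w)"
    by (simp add: red_reduced reduced_winv reduced_red)
  finally show ?thesis .
qed

section \<open>Substitution\<close>

definition subst_letter :: "(nat \<Rightarrow> word) \<Rightarrow> nat \<times> bool \<Rightarrow> word" where
  "subst_letter f x = (if snd x then winv (f (fst x)) else f (fst x))"

lemma subst_eq: "subst f w = red (concat (map (subst_letter f) w))"
proof -
  have "(\<lambda>(g, e). if e then winv (f g) else f g) = subst_letter f"
    by (auto simp: subst_letter_def fun_eq_iff)
  then show ?thesis by (simp add: subst_def)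
qed

lemma subst_Nil [simp]: "subst f [] = []"
  by (simp add: subst_eq)

lemma subst_gen [simp]: "subst f (gen g) = red (f g)"
  and subst_gen_inv [simp]: "subst f (gen_inv g) = winv (red (f g))"
  by (simp_all add: subst_eq subst_letter_def red_winv)

lemma subst_Cons: "subst f (x # w) = red (subst_letter f x @ subst f w)"
  unfolding subst_eq list.map concat.simps by (rule red_append_red_right)

lemma subst_append: "subst f (u @ v) = red (subst f u @ subst f v)"
  unfolding subst_eq map_append concat_append by (rule red_append_red)

lemma subst_red: "subst f (red w) = subst f w"
proof (induction w)
  case (Cons x w)
  have "subst f (red (x # w)) = subst f (x # red w)"
  proof (cases "red w")
    case (Cons y ys)
    show ?thesis
    proof (cases "cancels x y")
      case True
      then have "subst_letter f y = winv (subst_letter f x)"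
        using cancels_unique[of x y "inv_letter x"]
        by (simp add: cancels_def inv_letter_def subst_letter_def)
      then have "subst f (x # y # ys) = red ((subst_letter f x @ winv (subst_letter f x)) @ subst f ys)"
        by (simp add: subst_Cons red_append_red_right[symmetric])
      also have "\<dots> = subst f ys"
        by (metis red_append_Nil_left red_append_winv red_red subst_eq)
      finally have "subst f (x # y # ys) = subst f ys" .
      with Cons True show ?thesis by (simp add: red_Cons cons_red_def)
    qed (use Cons in \<open>simp add: red_Cons cons_red_def\<close>)
  qed (simp add: red_Cons cons_red_def)
  also have "\<dots> = subst f (x # w)"
    using Cons.IH by (simp add: subst_Cons)
  finally show ?case .
qed simp

lemma subst_winv: "subst f (winv w) = winv (subst f w)"
proof -
  have "concat (map (subst_letter f) (winv w)) = winv (concat (map (subst_letter f) w))"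
    by (induction w) (simp_all add: winv_Cons subst_letter_def inv_letter_def)
  then show ?thesis by (simp add: subst_eq red_winv)
qed

lemma subst_subst: "subst f (subst g w) = subst (\<lambda>i. subst f (g i)) w"
proof (induction w)
  case (Cons x w)
  have "subst f (subst_letter g x) = subst_letter (\<lambda>i. subst f (g i)) x"
    by (simp add: subst_letter_def subst_winv)
  then have "subst f (subst g (x # w))
      = red (subst_letter (\<lambda>i. subst f (g i)) x @ subst f (subst g w))"
    by (simp add: subst_Cons subst_red subst_append)
  then show ?case using Cons.IH by (simp add: subst_Cons)
qed simp

lemma subst_cong: "(\<And>x. x \<in> set w \<Longrightarrow> f (fst x) = f' (fst x)) \<Longrightarrow> subst f w = subst f' w"
  unfolding subst_eq by (metis (no_types, lifting) map_cong subst_letter_def)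

lemma subst_gens: "(\<And>x. x \<in> set w \<Longrightarrow> f (fst x) = gen (fst x)) \<Longrightarrow> subst f w = red w"
proof -
  assume "\<And>x. x \<in> set w \<Longrightarrow> f (fst x) = gen (fst x)"
  then have "concat (map (subst_letter f) w) = w"
    by (induction w) (auto simp: subst_letter_def winv_eq inv_letter_def)
  then show ?thesis by (simp add: subst_eq)
qed

lemma words_red: "w \<in> words n \<Longrightarrow> red w = w"
  by (simp add: words_def red_reduced)

lemma words_mono: "w \<in> words m \<Longrightarrow> m \<le> n \<Longrightarrow> w \<in> words n"
  by (auto simp: words_def)

lemma gen_in_words [simp]: "[(g, e)] \<in> words n \<longleftrightarrow> g < n"
  by (simp add: words_def)

lemma fst_set_winv: "fst ` set (winv w) = fst ` set w"
  by (force simp: winv_eq inv_letter_def image_iff)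

lemma subst_in_words:
  assumes "\<And>x. x \<in> set w \<Longrightarrow> f (fst x) \<in> words n"
  shows "subst f w \<in> words n"
proof -
  have "\<forall>y \<in> set (subst_letter f x). fst y < n" if "x \<in> set w" for x
  proof
    fix y assume "y \<in> set (subst_letter f x)"
    then have "fst y \<in> fst ` set (f (fst x))"
      using fst_set_winv[of "f (fst x)"] by (auto simp: subst_letter_def split: if_splits)
    then show "fst y < n" using assms[OF that] by (auto simp: words_def)
  qed
  then show ?thesis
    using set_red by (fastforce simp: words_def subst_eq reduced_red)
qed

lemma subst_sub2_in_words: "U \<in> words n \<Longrightarrow> V \<in> words n \<Longrightarrow> subst (sub2 U V) w \<in> words n"
  by (rule subst_in_words) (simp add: sub2_def)

lemma subst_sub2_gens: "w \<in> words 2 \<Longrightarrow> subst (sub2 (gen 0) (gen 1)) w = w"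
  by (subst subst_gens) (auto simp: words_def sub2_def words_red)

lemma shift_Nil [simp]: "shift [] = []"
  and shift_Cons: "shift (x # w) = (Suc (fst x), snd x) # shift w"
  and shift_append [simp]: "shift (u @ v) = shift u @ shift v"
  by (simp_all add: shift_def case_prod_beta)

lemma shift_red: "shift (red w) = red (shift w)"
proof -
  have "shift (cons_red x r) = cons_red (Suc (fst x), snd x) (shift r)" for x r
    by (cases r) (auto simp: cons_red_def shift_Cons cancels_def)
  then show ?thesis by (induction w) (simp_all add: red_Cons shift_Cons)
qed

lemma inj_shift: "inj shift"
  unfolding shift_def by (rule inj_mapI) (auto simp: inj_def)

lemma shift_in_words: "w \<in> words n \<Longrightarrow> shift w \<in> words (Suc n)"
proof -
  assume w: "w \<in> words n"
  then have "reduced (shift w)"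
    by (metis reduced_red shift_red words_red)
  with w show ?thesis by (auto simp: words_def shift_def)
qed

lemma subst_shift: "subst f (shift w) = subst (\<lambda>g. f (Suc g)) w"
proof -
  have "concat (map (subst_letter f) (shift w)) = concat (map (subst_letter (\<lambda>g. f (Suc g))) w)"
    by (induction w) (simp_all add: shift_Cons subst_letter_def)
  then show ?thesis by (simp add: subst_eq)
qed

lemma shift_subst: "shift (subst f w) = subst (\<lambda>g. shift (f g)) w"
proof -
  have "shift (winv u) = winv (shift u)" for u
    by (simp add: shift_def winv_def rev_map case_prod_beta comp_def)
  then have "shift (concat (map (subst_letter f) w)) = concat (map (subst_letter (\<lambda>g. shift (f g))) w)"
    by (induction w) (simp_all add: subst_letter_def)
  then show ?thesis by (simp add: subst_eq shift_red)
qed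

section \<open>The Magnus expansion\<close>

text \<open>\<open>magnus m w\<close> is the coefficient of the monomial \<open>X\<^sub>m\<^sub>1 \<cdots> X\<^sub>m\<^sub>k\<close> in the Magnus
  expansion of \<open>w\<close> into noncommutative power series, \<open>g \<mapsto> 1 + X\<^sub>g\<close>; the last equation comes
  from \<open>(1 + X\<^sub>g)\<^sup>-\<^sup>1 = 1 - X\<^sub>g (1 + X\<^sub>g)\<^sup>-\<^sup>1\<close>.\<close>
fun magnus :: "nat list \<Rightarrow> word \<Rightarrow> int" where
  "magnus [] w = 1"
| "magnus (h # m) [] = 0"
| "magnus (h # m) ((g, False) # w) = magnus (h # m) w + (if h = g then magnus m w else 0)"
| "magnus (h # m) ((g, True) # w) = magnus (h # m) w - (if h = g then magnus m ((g, True) # w) else 0)"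

fun series_mult :: "(nat list \<Rightarrow> int) \<Rightarrow> (nat list \<Rightarrow> int) \<Rightarrow> nat list \<Rightarrow> int" where
  "series_mult F G [] = F [] * G []"
| "series_mult F G (h # m) = F [] * G (h # m) + series_mult (\<lambda>n. F (h # n)) G m"

lemma series_mult_add_left: "series_mult (\<lambda>n. F n + F' n) G m = series_mult F G m + series_mult F' G m"
  by (induction m arbitrary: F F') (simp_all add: algebra_simps)

lemma series_mult_diff_left: "series_mult (\<lambda>n. F n - F' n) G m = series_mult F G m - series_mult F' G m"
  by (induction m arbitrary: F F') (simp_all add: algebra_simps)

lemma series_mult_add_right: "series_mult F (\<lambda>n. G n + G' n) m = series_mult F G m + series_mult F G' m"
  by (induction m arbitrary: F) (simp_all add: algebra_simps)

lemma series_mult_zero_left: "series_mult (\<lambda>n. 0) G m = 0"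
  by (induction m) simp_all

lemma series_mult_one_left: "series_mult (\<lambda>n. if n = [] then 1 else 0) G m = G m"
  by (cases m) (simp_all add: series_mult_zero_left)

lemma series_mult_zero_right:
  "(\<And>n. length n \<le> length m \<Longrightarrow> G n = 0) \<Longrightarrow> series_mult F G m = 0"
  by (induction m arbitrary: F) simp_all

lemma series_mult_cong_upto:
  "(\<And>n. length n \<le> length m \<Longrightarrow> F n = F' n) \<Longrightarrow> (\<And>n. length n \<le> length m \<Longrightarrow> G n = G' n)
    \<Longrightarrow> series_mult F G m = series_mult F' G' m"
proof (induction m arbitrary: F F')
  case (Cons h m)
  have "series_mult (\<lambda>n. F (h # n)) G m = series_mult (\<lambda>n. F' (h # n)) G' m"
    using Cons.prems by (intro Cons.IH) auto
  moreover have "F [] = F' []" "G (h # m) = G' (h # m)" using Cons.prems by auto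
  ultimately show ?case by simp
qed simp

lemma series_mult_lowest_left:
  "(\<And>n. length n < length m \<Longrightarrow> F n = 0) \<Longrightarrow> series_mult F G m = F m * G []"
  by (induction m arbitrary: F) auto

lemma series_mult_lowest_right:
  "(\<And>n. length n < length m \<Longrightarrow> G n = 0) \<Longrightarrow> series_mult F G m = F [] * G m"
  by (cases m) (auto intro: series_mult_zero_right)

lemma magnus_Nil: "magnus m [] = (if m = [] then 1 else 0)"
  by (cases m) simp_all

lemma magnus_Cons_gen_append:
  assumes IH: "\<And>m. magnus m (u @ v) = series_mult (\<lambda>n. magnus n u) (\<lambda>n. magnus n v) m"
  shows "magnus m ((g, False) # u @ v) = series_mult (\<lambda>n. magnus n ((g, False) # u)) (\<lambda>n. magnus n v) m"
proof (cases m)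
  case (Cons h m')
  then show ?thesis
    using IH[of m] IH[of m'] by (simp add: series_mult_add_left series_mult_zero_left)
qed simp

lemma magnus_Cons_gen_inv_append:
  assumes IH: "\<And>m. magnus m (u @ v) = series_mult (\<lambda>n. magnus n u) (\<lambda>n. magnus n v) m"
  shows "magnus m ((g, True) # u @ v) = series_mult (\<lambda>n. magnus n ((g, True) # u)) (\<lambda>n. magnus n v) m"
proof (induction m)
  case (Cons h m)
  define U where "U = (\<lambda>n. magnus n ((g, True) # u))"
  have "series_mult U (\<lambda>n. magnus n v) (h # m)
      = series_mult (\<lambda>n. magnus n u) (\<lambda>n. magnus n v) (h # m)
        - series_mult (\<lambda>n. if h = g then U n else 0) (\<lambda>n. magnus n v) m"
    unfolding U_def by (simp add: series_mult_diff_left[symmetric])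
  also have "series_mult (\<lambda>n. if h = g then U n else 0) (\<lambda>n. magnus n v) m
      = (if h = g then magnus m ((g, True) # u @ v) else 0)"
    using Cons.IH by (simp add: U_def series_mult_zero_left)
  finally show ?case using IH[of "h # m"] by (simp add: U_def)
qed simp

lemma magnus_append: "magnus m (u @ v) = series_mult (\<lambda>n. magnus n u) (\<lambda>n. magnus n v) m"
proof (induction u arbitrary: m)
  case Nil
  then show ?case by (simp add: magnus_Nil series_mult_one_left)
next
  case (Cons x u)
  then show ?case
    using magnus_Cons_gen_append magnus_Cons_gen_inv_append by (cases x; cases "snd x") auto
qed

lemma magnus_Cons_Cons_cancel: "cancels x y \<Longrightarrow> magnus m (x # y # w) = magnus m w"
proof -
  assume xy: "cancels x y"
  obtain g e where x: "x = (g, e)" and y: "y = (g, \<not> e)"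
    using xy by (cases x; cases y) (auto simp: cancels_def)
  have "magnus n [x, y] = magnus n []" for n
  proof (cases e)
    case True
    then show ?thesis using x y
      by (induction n) (auto simp: magnus_Nil neq_Nil_conv)
  qed (use x y in \<open>cases n; auto simp: magnus_Nil\<close>)
  then have "magnus m ([x, y] @ w) = series_mult (\<lambda>n. if n = [] then 1 else 0) (\<lambda>n. magnus n w) m"
    unfolding magnus_append by (simp add: magnus_Nil)
  then show ?thesis by (simp add: series_mult_one_left)
qed

lemma magnus_red: "magnus m (red w) = magnus m w"
proof (induction w arbitrary: m)
  case (Cons x w)
  have "magnus m (cons_red x (red w)) = magnus m (x # red w)"
    by (cases "red w") (auto simp: cons_red_def magnus_Cons_Cons_cancel)
  also have "\<dots> = magnus m (x # w)"
    using magnus_append[of m "[x]"] Cons.IH by simp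
  finally show ?case by (simp add: red_Cons)
qed simp

text \<open>The linear coefficients \<open>magnus [g]\<close> are the exponent sums: they describe the abelianization.\<close>

lemma magnus1_append: "magnus [g] (u @ v) = magnus [g] u + magnus [g] v"
  by (simp add: magnus_append)

lemma magnus1_Cons: "magnus [h] ((g, e) # w) = (if h = g then (if e then -1 else 1) else 0) + magnus [h] w"
  by (cases e) simp_all

lemma magnus1_winv: "magnus [g] (winv u) = - magnus [g] u"
  using magnus1_append[of g "winv u" u] magnus_red[of "[g]" "winv u @ u"] by (simp add: red_winv_append)

lemma magnus1_notin: "(\<forall>x \<in> set w. fst x \<noteq> h) \<Longrightarrow> magnus [h] w = 0"
  by (induction w) (auto simp: magnus1_Cons)

lemma magnus1_replicate: "magnus [g] (replicate n (g, e)) = (if e then - int n else int n)"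
  by (induction n) (auto simp: magnus1_Cons)

lemma magnus1_subst:
  "\<forall>x \<in> set w. fst x < N \<Longrightarrow> magnus [h] (subst f w) = (\<Sum>g<N. magnus [g] w * magnus [h] (f g))"
proof (induction w)
  case (Cons x w)
  obtain g e where x: "x = (g, e)" by force
  define s :: int where "s = (if e then -1 else 1)"
  have "magnus [h] (subst f (x # w)) = s * magnus [h] (f g) + magnus [h] (subst f w)"
    by (simp add: subst_Cons magnus_red magnus1_append x s_def subst_letter_def magnus1_winv)
  moreover have "(\<Sum>g'<N. (if g' = g then s else 0) * magnus [h] (f g')) = s * magnus [h] (f g)"
  proof -
    have "(\<Sum>g'<N. (if g' = g then s else 0) * magnus [h] (f g'))
        = (\<Sum>g'<N. if g' = g then s * magnus [h] (f g') else 0)"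
      by (rule sum.cong) auto
    then show ?thesis using Cons.prems x by simp
  qed
  moreover have "magnus [g'] (x # w) = (if g' = g then s else 0) + magnus [g'] w" for g'
    by (simp add: x magnus1_Cons s_def)
  ultimately show ?case
    using Cons by (simp add: ring_distribs sum.distrib)
qed simp

section \<open>Faithfulness of the Magnus expansion\<close>

definition syllables :: "word \<Rightarrow> nat" where
  "syllables w = length (remdups_adj (map fst w))"

lemma syllables_Cons: "syllables (x # w) = Suc (syllables (dropWhile (\<lambda>y. fst y = fst x) w))"
  by (simp add: syllables_def remdups_adj_Cons' dropWhile_map comp_def)

lemma syllables_le_Cons: "syllables w \<le> syllables (x # w)"
  by (auto simp: syllables_def remdups_adj_Cons split: list.splits)

lemma magnus_Cons_other: "m = [] \<or> hd m \<noteq> fst x \<Longrightarrow> magnus m (x # w) = magnus m w"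
  by (cases m; cases x; cases "snd x") auto

lemma magnus_Cons_head:
  "m = [] \<or> hd m \<noteq> g \<Longrightarrow> magnus (g # m) ((g, e) # w) = magnus (g # m) w + (if e then -1 else 1) * magnus m w"
  by (cases e) (auto simp: magnus_Cons_other)

lemma magnus_dropWhile: "m = [] \<or> hd m \<noteq> g \<Longrightarrow> magnus m (dropWhile (\<lambda>y. fst y = g) w) = magnus m w"
  by (induction w) (auto simp: magnus_Cons_other)

lemma magnus_replicate_other:
  "m = [] \<or> hd m \<noteq> g \<Longrightarrow> magnus m (replicate k (g, e) @ r) = magnus m r"
  by (induction k) (auto simp: magnus_Cons_other)

lemma magnus_replicate_head:
  "m = [] \<or> hd m \<noteq> g \<Longrightarrow>
    magnus (g # m) (replicate k (g, e) @ r) = magnus (g # m) r + (if e then -1 else 1) * int k * magnus m r"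
  by (induction k) (auto simp: magnus_Cons_head magnus_replicate_other algebra_simps)

lemma magnus_eq_0_if_few_syllables:
  "distinct_adj m \<Longrightarrow> syllables w < length m \<Longrightarrow> magnus m w = 0"
proof (induction w arbitrary: m rule: length_induct)
  case (1 w)
  obtain h m' where m: "m = h # m'" using "1.prems" by (cases m) auto
  show ?case
  proof (cases w)
    case (Cons x w')
    have IH: "magnus n w'' = 0" if "length w'' < length w" "distinct_adj n" "syllables w'' < length n" for w'' n
      using "1.IH" that by blast
    show ?thesis
    proof (cases "h = fst x")
      case False
      then show ?thesis
        using Cons m IH[of w' m] "1.prems" syllables_le_Cons[of w' x] by (simp add: magnus_Cons_other)
    next
      case True
      obtain g e where x: "x = (g, e)" by force
      have hm': "m' = [] \<or> hd m' \<noteq> g"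
        using "1.prems"(1) m True x by (auto simp: distinct_adj_Cons)
      let ?r = "dropWhile (\<lambda>y. fst y = g) w'"
      have "magnus m' ?r = 0"
        using IH[of ?r m'] "1.prems" Cons m x syllables_Cons[of x w']
        length_dropWhile_le[of "\<lambda>y. fst y = g" w'] by (auto dest: distinct_adj_ConsD)
      moreover have "magnus (g # m') w' = 0"
        using IH[of w' "g # m'"] "1.prems" Cons m True x syllables_le_Cons[of w' x] by simp
      ultimately show ?thesis
        using Cons m True x magnus_Cons_head[OF hm'] magnus_dropWhile[OF hm'] by simp
    qed
  qed (use m in simp)
qed

lemma reduced_takeWhile_same_gen:
  "reduced (x # w) \<Longrightarrow> y \<in> set (takeWhile (\<lambda>y. fst y = fst x) w) \<Longrightarrow> y = x"
proof (induction w)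
  case (Cons z w)
  show ?case
  proof (cases "fst z = fst x")
    case True
    then have "z = x" using Cons.prems(1) by (cases z; cases x) (auto simp: cancels_def)
    then show ?thesis using Cons by (auto dest: reduced_ConsD)
  qed (use Cons.prems in simp)
qed simp

text \<open>The coefficient of the monomial spelling out the syllable pattern of a nonempty reduced
  word is the product of its syllable exponents, in particular nonzero.\<close>

lemma magnus_syllable_pattern_neq_0:
  "reduced z \<Longrightarrow> z \<noteq> [] \<Longrightarrow> magnus (remdups_adj (map fst z)) z \<noteq> 0"
proof (induction z rule: length_induct)
  case (1 z)
  obtain g e w where z: "z = (g, e) # w" using "1.prems" by (cases z) auto
  let ?p = "takeWhile (\<lambda>y. fst y = g) w"
  let ?r = "dropWhile (\<lambda>y. fst y = g) w"
  let ?mr = "remdups_adj (map fst ?r)"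
  have "?p = replicate (length ?p) (g, e)"
    using reduced_takeWhile_same_gen[of "(g, e)" w] "1.prems" z by (simp add: replicate_length_same)
  then have zz: "z = replicate (Suc (length ?p)) (g, e) @ ?r"
    using z takeWhile_dropWhile_id[of _ w] by (metis append_Cons replicate_Suc)
  have mz: "remdups_adj (map fst z) = g # ?mr"
    using z by (simp add: remdups_adj_Cons' dropWhile_map comp_def)
  have hr: "?mr = [] \<or> hd ?mr \<noteq> g"
    using hd_dropWhile[of "\<lambda>y. fst y = g" w] by (cases ?r) auto
  have "magnus (g # ?mr) ?r = 0"
    using hr by (intro magnus_eq_0_if_few_syllables) (auto simp: distinct_adj_Cons syllables_def)
  moreover have "magnus ?mr ?r \<noteq> 0"
  proof (cases "?r = []")
    case False
    have "reduced ?r"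
      using "1.prems"(1) zz reduced_append by (metis reduced_ConsD append_Cons)
    moreover have "length ?r < length z"
      using z length_dropWhile_le[of "\<lambda>y. fst y = g" w] by simp
    ultimately show ?thesis using "1.IH" False by blast
  qed (simp del: dropWhile_eq_Nil_conv)
  ultimately show ?case
    using mz magnus_replicate_head[OF hr, of "Suc (length ?p)" e ?r] zz by simp
qed

theorem magnus_inj:
  assumes "reduced u" "reduced u'" "\<And>m. magnus m u = magnus m u'"
  shows "u = u'"
proof -
  let ?z = "red (u @ winv u')"
  have "magnus m ?z = magnus m (red (u' @ winv u'))" for m
    using assms(3) by (simp add: magnus_red magnus_append)
  then have "magnus m ?z = magnus m []" for m
    by (simp add: red_append_winv)
  then have "?z = []"
    using magnus_syllable_pattern_neq_0[OF reduced_red] by (metis magnus_Nil remdups_adj_Nil_iff map_is_Nil_conv)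
  then have "red (?z @ u') = u'"
    using assms(2) red_reduced by simp
  moreover have "red (?z @ u') = u"
    using red_append_red_left[of "u @ winv u'" u'] red_append_Nil_right[OF red_winv_append, of u]
      red_reduced[OF assms(1)] by simp
  ultimately show ?thesis by simp
qed

section \<open>Periodic endomorphisms trivial on the abelianization\<close>

lemma magnus_gen_long: "2 \<le> length n \<Longrightarrow> magnus n (gen g) = 0"
  by (cases n; cases "tl n") auto

lemma series_mult_cancel_right:
  assumes X0: "X [] = 1" and eq: "\<And>n. length n \<le> d \<Longrightarrow> series_mult E X n = series_mult E' X n"
  shows "length n \<le> d \<Longrightarrow> E n = E' n"
proof (induction n rule: length_induct)
  case (1 n)
  then have "series_mult (\<lambda>n. E n - E' n) X n = (E n - E' n) * X []"
    by (intro series_mult_lowest_left) auto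
  moreover have "series_mult (\<lambda>n. E n - E' n) X n = 0"
    using eq[OF "1.prems"] by (simp add: series_mult_diff_left)
  ultimately show ?case using X0 by simp
qed

lemma magnus_winv_top:
  assumes d: "2 \<le> d" and low: "\<And>n. length n < d \<Longrightarrow> magnus n X = magnus n (gen g)"
    and n: "length n \<le> d"
  shows "magnus n (winv X) = magnus n (gen_inv g) - (if length n = d then magnus n X else 0)"
proof -
  define T where "T = (\<lambda>n. if length n = d then magnus n X else 0)"
  have X: "magnus n X = magnus n (gen g) + T n" if "length n \<le> d" for n
    using that low[of n] magnus_gen_long[of n g] d by (cases "length n = d") (auto simp: T_def)
  have "series_mult (\<lambda>n. magnus n (winv X)) (\<lambda>n. magnus n X) n
      = series_mult (\<lambda>n. magnus n (gen_inv g) - T n) (\<lambda>n. magnus n X) n" if "length n \<le> d" for n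
  proof -
    have "series_mult (\<lambda>n. magnus n (winv X)) (\<lambda>n. magnus n X) n = magnus n []"
      using magnus_red[of n "winv X @ X"] by (simp add: red_winv_append magnus_append)
    moreover have "series_mult T (\<lambda>n. magnus n X) n = T n"
      using that series_mult_lowest_left[of n T] by (auto simp: T_def)
    moreover have "series_mult (\<lambda>n. magnus n (gen_inv g)) (\<lambda>n. magnus n X) n
        = series_mult (\<lambda>n. magnus n (gen_inv g)) (\<lambda>n. magnus n (gen g) + T n) n"
      using that X by (intro series_mult_cong_upto) auto
    moreover have "series_mult (\<lambda>n. magnus n (gen_inv g)) (\<lambda>n. magnus n (gen g)) n = magnus n []"
      using magnus_Cons_Cons_cancel[of "(g, True)" "(g, False)" n "[]"]
      by (simp add: magnus_append[symmetric] cancels_def)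
    moreover have "series_mult (\<lambda>n. magnus n (gen_inv g)) T n = T n"
      using that series_mult_lowest_right[of n T] by (auto simp: T_def)
    ultimately show ?thesis
      by (simp add: series_mult_diff_left series_mult_add_right)
  qed
  then have "magnus n (winv X) = magnus n (gen_inv g) - T n"
    using series_mult_cancel_right[of "\<lambda>n. magnus n X" d "\<lambda>n. magnus n (winv X)"
        "\<lambda>n. magnus n (gen_inv g) - T n", OF _ _ n] by simp
  then show ?thesis by (simp add: T_def)
qed

lemma magnus_subst_letter_top:
  assumes d: "2 \<le> d" and low: "\<And>n. length n < d \<Longrightarrow> magnus n (f g) = magnus n (gen g)"
    and n: "length n \<le> d"
  shows "magnus n (subst_letter f (g, e)) =
    magnus n [(g, e)] + (if length n = d then (if e then -1 else 1) * magnus n (f g) else 0)"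
proof (cases e)
  case True
  then show ?thesis
    using magnus_winv_top[OF d low n] by (simp add: subst_letter_def)
next
  case False
  then show ?thesis
    using low[of n] magnus_gen_long[of n g] d n by (cases "length n = d") (auto simp: subst_letter_def)
qed

lemma magnus_subst_top:
  assumes d: "2 \<le> d" and low: "\<And>g n. g < N \<Longrightarrow> length n < d \<Longrightarrow> magnus n (f g) = magnus n (gen g)"
    and w: "\<forall>x \<in> set w. fst x < N" and n: "length n \<le> d"
  shows "magnus n (subst f w) =
    magnus n w + (if length n = d then \<Sum>g<N. magnus [g] w * magnus n (f g) else 0)"
proof -
  have "magnus n (concat (map (subst_letter f) w)) =
      magnus n w + (if length n = d then \<Sum>g<N. magnus [g] w * magnus n (f g) else 0)"
    using w n
  proof (induction w arbitrary: n)
    case (Cons x w)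
    obtain g e where x: "x = (g, e)" by force
    define s :: int where "s = (if e then -1 else 1)"
    define Tx where "Tx = (\<lambda>n. if length n = d then s * magnus n (f g) else 0)"
    define Tw where "Tw = (\<lambda>n. if length n = d then \<Sum>g<N. magnus [g] w * magnus n (f g) else 0)"
    have g: "g < N" using Cons.prems x by simp
    have "magnus n (concat (map (subst_letter f) (x # w)))
        = series_mult (\<lambda>n. magnus n [x] + Tx n) (\<lambda>n. magnus n w + Tw n) n"
      unfolding list.map concat.simps magnus_append using Cons magnus_subst_letter_top[of d f g, OF d low[OF g]] x
      by (intro series_mult_cong_upto) (auto simp: Tx_def Tw_def s_def)
    also have "\<dots> = magnus n (x # w) + (Tw n + Tx n)"
      using Cons.prems(2) magnus_append[of n "[x]" w] d
        series_mult_lowest_right[of n Tw "\<lambda>n. magnus n [x]"]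
        series_mult_lowest_left[of n Tx "\<lambda>n. magnus n w"] series_mult_lowest_left[of n Tx Tw]
      by (simp add: series_mult_add_left series_mult_add_right Tx_def Tw_def)
    also have "Tw n + Tx n = (if length n = d then \<Sum>g'<N. magnus [g'] (x # w) * magnus n (f g') else 0)"
    proof -
      have "(\<Sum>g'<N. (if g' = g then s else 0) * magnus n (f g')) = s * magnus n (f g)"
        using g by (simp add: if_distrib[of "\<lambda>c. c * _"] sum.delta cong: if_cong)
      moreover have "magnus [g'] (x # w) = (if g' = g then s else 0) + magnus [g'] w" for g'
        by (simp add: x magnus1_Cons s_def)
      ultimately show ?thesis by (simp add: Tx_def Tw_def ring_distribs sum.distrib)
    qed
    finally show ?case .
  qed (simp add: magnus_Nil)
  then show ?thesis by (simp add: subst_eq magnus_red)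
qed

lemma subst_endo_in_words:
  "(\<And>g. g < N \<Longrightarrow> f g \<in> words N) \<Longrightarrow> w \<in> words N \<Longrightarrow> subst f w \<in> words N"
  by (rule subst_in_words) (auto simp: words_def)

lemma funpow_subst_endo_in_words:
  "(\<And>g. g < N \<Longrightarrow> f g \<in> words N) \<Longrightarrow> w \<in> words N \<Longrightarrow> (subst f ^^ k) w \<in> words N"
  by (induction k) (auto intro: subst_endo_in_words)

text \<open>Once \<open>f\<close> is trivial below degree \<open>d\<close>, each application of \<open>f\<close> adds the same
  degree-\<open>d\<close> deviation, which periodicity forces to be \<open>0\<close>.\<close>

lemma periodic_subst_top_degree_trivial:
  assumes endo: "\<And>g. g < N \<Longrightarrow> f g \<in> words N"
    and low: "\<And>g n. g < N \<Longrightarrow> length n < d \<Longrightarrow> magnus n (f g) = magnus n (gen g)"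
    and d: "2 \<le> d" and periodic: "0 < p" "(subst f ^^ p) (gen g) = gen g"
    and g: "g < N" and n: "length n = d"
  shows "magnus n (f g) = 0"
proof -
  have top: "magnus m (subst f w) = magnus m w
      + (if length m = d then \<Sum>g<N. magnus [g] w * magnus m (f g) else 0)"
    if "w \<in> words N" "length m \<le> d" for w m
    using magnus_subst_top[OF d low _ that(2)] that(1) by (auto simp: words_def)
  define K where "K = (\<Sum>g'<N. magnus [g'] (gen g) * magnus n (f g'))"
  have "magnus n ((subst f ^^ k) (gen g)) = magnus n (gen g) + int k * K
      \<and> (\<forall>h. magnus [h] ((subst f ^^ k) (gen g)) = magnus [h] (gen g))" for k
  proof (induction k)
    case (Suc k)
    have "(subst f ^^ k) (gen g) \<in> words N"
      using funpow_subst_endo_in_words[OF endo] g by simp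
    then show ?case
      using Suc top[of _ n] top[of _ "[_]"] d n by (auto simp: K_def algebra_simps)
  qed simp
  from this[of p] have "K = 0"
    using periodic by simp
  moreover have "K = magnus n (f g)"
    using g by (simp add: K_def if_distrib[of "\<lambda>c. c * _"] sum.delta cong: if_cong)
  ultimately show ?thesis by simp
qed

theorem periodic_subst_IA_trivial:
  assumes endo: "\<And>g. g < N \<Longrightarrow> f g \<in> words N"
    and IA: "\<And>g h. g < N \<Longrightarrow> h < N \<Longrightarrow> magnus [h] (f g) = magnus [h] (gen g)"
    and periodic: "0 < p" "\<And>g. g < N \<Longrightarrow> (subst f ^^ p) (gen g) = gen g"
    and g: "g < N"
  shows "f g = gen g"
proof -
  have "magnus n (f g) = magnus n (gen g)" if "2 \<le> d" "g < N" "length n < d" for g n d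
    using that
  proof (induction d arbitrary: g n rule: nat_induct_at_least)
    case base
    then consider "n = []" | h where "n = [h]"
      by (cases n) (auto simp: numeral_2_eq_2)
    then show ?case
    proof cases
      case (2 h)
      then show ?thesis
        using base(1) IA[OF base(1)] endo[OF base(1)] magnus1_notin[of "f g" h]
        by (cases "h < N") (auto simp: words_def)
    qed simp
  next
    case (Suc d)
    then show ?case
      using periodic_subst_top_degree_trivial[OF endo _ Suc.hyps periodic(1) periodic(2)]
        magnus_gen_long[of n] by (cases "length n = d") auto
  qed
  then have "magnus n (f g) = magnus n (gen g)" for n
    using g by (metis le_add2 less_add_Suc1 add_2_eq_Suc')
  then show ?thesis
    using magnus_inj endo[OF g] by (simp add: words_def)
qed

section \<open>Braid relations with an inversion of a generator\<close>

lemma magnus1_subst_sub2: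
  "w \<in> words 2 \<Longrightarrow> magnus [h] (subst (sub2 U V) w) = magnus [0] w * magnus [h] U + magnus [1] w * magnus [h] V"
  by (simp add: magnus1_subst[of w 2] words_def numeral_2_eq_2 sub2_def)

text \<open>If \<open>k\<close> is a bijection satisfying the braid relation with an involution \<open>\<beta>\<close>, then
  \<open>k = (\<beta> k) \<beta> (\<beta> k)\<^sup>-\<^sup>1\<close> is conjugate to \<open>\<beta>\<close>, so \<open>k\<close> is an involution and \<open>(\<beta> k)\<^sup>3 = 1\<close>.\<close>

lemma braid_relation_with_involution:
  assumes \<beta>: "\<And>w. w \<in> W \<Longrightarrow> \<beta> w \<in> W" "\<And>w. w \<in> W \<Longrightarrow> \<beta> (\<beta> w) = w"
    and k: "bij_betw k W W"
    and braid: "\<And>w. w \<in> W \<Longrightarrow> \<beta> (k (\<beta> w)) = k (\<beta> (k w))"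
  shows "\<And>w. w \<in> W \<Longrightarrow> k (k w) = w"
    and "\<And>w. w \<in> W \<Longrightarrow> \<beta> (k (\<beta> (k (\<beta> (k w))))) = w"
proof -
  have kW: "w \<in> W \<Longrightarrow> k w \<in> W" for w
    using k by (auto simp: bij_betw_def)
  show kk: "k (k w) = w" if w: "w \<in> W" for w
  proof -
    obtain u where u: "u \<in> W" "k u = \<beta> w"
      using k \<beta>(1)[OF w] by (metis bij_betw_iff_bijections)
    have comm: "k (\<beta> (k v)) = \<beta> (k (\<beta> v))" if "v \<in> W" for v
      using braid[OF that] by simp
    have "k (k (\<beta> (k u))) = k (\<beta> (k (\<beta> u)))"
      using comm[OF u(1)] by simp
    also have "\<dots> = \<beta> (k u)"
      using comm[OF \<beta>(1)[OF u(1)]] \<beta>(2)[OF u(1)] by simp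
    finally show ?thesis using u \<beta>(2)[OF w] by simp
  qed
  show "\<beta> (k (\<beta> (k (\<beta> (k w))))) = w" if w: "w \<in> W" for w
  proof -
    have "\<beta> (k (\<beta> (k (\<beta> (k w))))) = \<beta> (k (\<beta> (\<beta> (k (\<beta> w)))))"
      using braid[OF w] by simp
    also have "\<dots> = w"
      using \<beta> kk kW w by simp
    finally show ?thesis .
  qed
qed

lemma int_involution_braid_reflection:
  fixes x y z w :: int
  assumes inv: "x * x + y * z = 1" "z * y + w * w = 1"
    and braid: "x = - x * x + y * z" "w = - z * y + w * w" "- y = - x * y + y * w" "- z = - x * z + z * w"
  shows "x = -1 \<and> y = 0 \<and> z = 0 \<and> w = 1"
proof -
  have "y * z = 1 - x * x" "y * z = 1 - w * w"
    using inv by (simp_all add: algebra_simps)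
  then have "(2 * x - 1) * (x + 1) = 0" "(2 * w + 1) * (w - 1) = 0"
    using braid(1,2) by (simp_all add: algebra_simps)
  moreover have "2 * x - 1 \<noteq> 0" "2 * w + 1 \<noteq> 0" by presburger+
  ultimately have x: "x = -1" and w: "w = 1" by simp_all
  then have "3 * y = 0" "3 * z = 0"
    using braid(3,4) by (simp_all add: algebra_simps)
  with x w show ?thesis by simp
qed

abbreviation invert_a :: "word \<Rightarrow> word" where
  "invert_a \<equiv> subst (sub2 (gen_inv 0) (gen 1))"

abbreviation invert_b :: "word \<Rightarrow> word" where
  "invert_b \<equiv> subst (sub2 (gen 0) (gen_inv 1))"

lemma invert_a_invert_a: "w \<in> words 2 \<Longrightarrow> invert_a (invert_a w) = w"
proof -
  assume w: "w \<in> words 2"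
  have "invert_a (invert_a w) = red w"
    unfolding subst_subst by (rule subst_gens) (use w in \<open>auto simp: words_def sub2_def winv_eq inv_letter_def\<close>)
  then show ?thesis using words_red[OF w] by simp
qed

lemma magnus1_invert_a:
  "u \<in> words 2 \<Longrightarrow> magnus [0] (invert_a u) = - magnus [0] u \<and> magnus [1] (invert_a u) = magnus [1] u"
  by (simp add: magnus1_subst_sub2)

lemma braid_relation_invert_a_abelianization:
  assumes CD: "C \<in> words 2" "D \<in> words 2"
    and involution: "\<And>w. w \<in> words 2 \<Longrightarrow> subst (sub2 C D) (subst (sub2 C D) w) = w"
    and braid: "\<And>w. w \<in> words 2 \<Longrightarrow>
      invert_a (subst (sub2 C D) (invert_a w)) = subst (sub2 C D) (invert_a (subst (sub2 C D) w))"
  shows "magnus [0] C = -1 \<and> magnus [0] D = 0 \<and> magnus [1] C = 0 \<and> magnus [1] D = 1"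
proof -
  let ?k = "subst (sub2 C D)"
  have kW: "?k w \<in> words 2" and bW: "invert_a w \<in> words 2" for w
    using CD by (simp_all add: subst_sub2_in_words)
  define x y z w where "x = magnus [0] C" "y = magnus [0] D" "z = magnus [1] C" "w = magnus [1] D"
  have k1: "u \<in> words 2 \<Longrightarrow> magnus [0] (?k u) = magnus [0] u * x + magnus [1] u * y"
    "u \<in> words 2 \<Longrightarrow> magnus [1] (?k u) = magnus [0] u * z + magnus [1] u * w" for u
    by (simp_all add: magnus1_subst_sub2 x_y_z_w_def)
  note b1 = magnus1_invert_a[THEN conjunct1] magnus1_invert_a[THEN conjunct2]
  have "?k C = gen 0" "?k D = gen 1"
    using involution[of "gen 0"] involution[of "gen 1"] CD by (simp_all add: sub2_def words_red)
  then have "x * x + y * z = 1 \<and> z * y + w * w = 1"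
    using k1(1)[OF CD(1)] k1(2)[OF CD(2)] by (simp add: x_y_z_w_def algebra_simps)
  moreover have "x = - x * x + y * z \<and> - z = - x * z + z * w"
    using arg_cong[OF braid[of "gen 0"], of "magnus [0]"] arg_cong[OF braid[of "gen 0"], of "magnus [1]"]
    using k1 b1 kW bW by (simp add: x_y_z_w_def algebra_simps del: subst_gen subst_gen_inv)
  moreover have "w = - z * y + w * w \<and> - y = - x * y + y * w"
    using arg_cong[OF braid[of "gen 1"], of "magnus [1]"] arg_cong[OF braid[of "gen 1"], of "magnus [0]"]
    using k1 b1 kW bW by (simp add: x_y_z_w_def algebra_simps del: subst_gen subst_gen_inv)
  ultimately show ?thesis
    using int_involution_braid_reflection unfolding x_y_z_w_def by blast
qed

theorem braid_relation_invert_a_unique: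
  assumes CD: "C \<in> words 2" "D \<in> words 2" and aut: "is_aut2 C D"
    and braid: "\<And>w. w \<in> words 2 \<Longrightarrow>
      invert_a (subst (sub2 C D) (invert_a w)) = subst (sub2 C D) (invert_a (subst (sub2 C D) w))"
  shows "C = gen_inv 0 \<and> D = gen 1"
proof -
  let ?k = "subst (sub2 C D)" and ?f = "sub2 (invert_a C) (invert_a D)"
  have bW: "invert_a w \<in> words 2" for w
    by (simp add: subst_sub2_in_words)
  note rel = braid_relation_with_involution[OF bW invert_a_invert_a aut[unfolded is_aut2_def] braid]
  have ab: "magnus [0] C = -1 \<and> magnus [0] D = 0 \<and> magnus [1] C = 0 \<and> magnus [1] D = 1"
    using braid_relation_invert_a_abelianization[OF CD rel(1) braid] .
  have f: "subst ?f u = invert_a (?k u)" for u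
    unfolding subst_subst by (rule arg_cong[where f = "\<lambda>h. subst h u"]) (auto simp: sub2_def)
  have "?f g = gen g" if "g < 2" for g
  proof (rule periodic_subst_IA_trivial[where N = 2 and p = 3 and f = ?f])
    show "(subst ?f ^^ 3) (gen g) = gen g" if "g < 2" for g
      unfolding numeral_3_eq_3 funpow.simps comp_apply id_apply f using that by (intro rel(2)) simp_all
    show "magnus [h] (?f g) = magnus [h] (gen g)" if "g < 2" "h < 2" for g h
      using that ab CD magnus1_invert_a[of C] magnus1_invert_a[of D] by (auto simp: sub2_def less_2_cases_iff)
  qed (use bW that in \<open>simp_all add: sub2_def\<close>)
  from this[of 0] this[of 1] have "invert_a C = gen 0" "invert_a D = gen 1"
    by (simp_all add: sub2_def)
  then have "C = invert_a (gen 0)" "D = invert_a (gen 1)"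
    using invert_a_invert_a CD by metis+
  then show ?thesis by (simp add: sub2_def)
qed

definition swap_gen :: "nat \<Rightarrow> nat" where
  "swap_gen g = (if g = 0 then 1 else 0)"

lemma swapab_eq: "swapab w = map (\<lambda>x. (swap_gen (fst x), snd x)) w"
  by (simp add: swapab_def swap_gen_def case_prod_beta)

lemma swapab_swapab: "\<forall>x \<in> set w. fst x < 2 \<Longrightarrow> swapab (swapab w) = w"
  by (induction w) (auto simp: swapab_eq swap_gen_def)

lemma swapab_red: "\<forall>x \<in> set w. fst x < 2 \<Longrightarrow> swapab (red w) = red (swapab w)"
proof (induction w)
  case (Cons x w)
  have "\<forall>y \<in> set (red w). fst y < 2" using Cons.prems set_red by fastforce
  then have "swapab (cons_red x (red w)) = cons_red (swap_gen (fst x), snd x) (swapab (red w))"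
    using Cons.prems by (cases "red w") (auto simp: cons_red_def swapab_eq cancels_def swap_gen_def)
  then show ?case using Cons by (simp add: red_Cons swapab_eq)
qed (simp add: swapab_eq)
lemma swapab_in_words: "w \<in> words 2 \<Longrightarrow> swapab w \<in> words 2"
proof -
  assume w: "w \<in> words 2"
  then have "swapab w = red (swapab w)"
    using swapab_red[of w] words_red[OF w] by (simp add: words_def)
  then have "reduced (swapab w)"
    using reduced_red by metis
  then show ?thesis by (auto simp: words_def swapab_eq swap_gen_def)
qed

lemma swapab_Nil: "swapab [] = []"
  and swapab_Cons: "swapab (x # w) = (swap_gen (fst x), snd x) # swapab w"
  and swapab_append: "swapab (u @ v) = swapab u @ swapab v"
  and swapab_winv: "swapab (winv w) = winv (swapab w)"
  by (simp_all add: swapab_eq winv_eq rev_map inv_letter_def comp_def)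

lemma subst_sub2_swapab:
  assumes "U \<in> words 2" "V \<in> words 2"
  shows "subst (sub2 (swapab V) (swapab U)) (swapab w) = swapab (subst (sub2 U V) w)"
proof -
  have letter: "subst_letter (sub2 (swapab V) (swapab U)) (swap_gen (fst x), snd x)
      = swapab (subst_letter (sub2 U V) x)" for x
    by (simp add: subst_letter_def sub2_def swap_gen_def swapab_winv)
  have "concat (map (subst_letter (sub2 (swapab V) (swapab U))) (swapab w))
      = swapab (concat (map (subst_letter (sub2 U V)) w))"
    by (induction w) (simp_all add: swapab_Nil swapab_Cons swapab_append letter)
  moreover have "\<forall>x \<in> set (concat (map (subst_letter (sub2 U V)) w)). fst x < 2"
  proof -
    have "\<forall>x \<in> set (subst_letter (sub2 U V) y). fst x < 2" for y
      using assms by (auto simp: words_def subst_letter_def sub2_def winv_eq inv_letter_def)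
    then show ?thesis by auto
  qed
  ultimately show ?thesis
    by (simp add: subst_eq swapab_red)
qed
theorem braid_relation_invert_b_unique:
  assumes AB: "A \<in> words 2" "B \<in> words 2" and aut: "is_aut2 A B"
    and braid: "\<And>w. w \<in> words 2 \<Longrightarrow>
      invert_b (subst (sub2 A B) (invert_b w)) = subst (sub2 A B) (invert_b (subst (sub2 A B) w))"
  shows "A = gen 0 \<and> B = gen_inv 1"
proof -
  let ?t = "subst (sub2 A B)" and ?k = "subst (sub2 (swapab B) (swapab A))"
  have ss: "w \<in> words 2 \<Longrightarrow> swapab (swapab w) = w" for w
    by (simp add: swapab_swapab words_def)
  have k: "?k (swapab u) = swapab (?t u)" for u
    by (rule subst_sub2_swapab[OF AB])
  have a: "invert_a (swapab u) = swapab (invert_b u)" for u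
    using subst_sub2_swapab[of "gen 0" "gen_inv 1" u] by (simp add: swapab_eq swap_gen_def)
  have tW: "?t u \<in> words 2" and bW: "invert_b u \<in> words 2" for u
    using AB by (simp_all add: subst_sub2_in_words)
  have "bij_betw (swapab \<circ> ?t \<circ> swapab) (words 2) (words 2)"
  proof -
    have "bij_betw swapab (words 2) (words 2)"
      by (rule bij_betw_byWitness[where f' = swapab]) (auto simp: ss swapab_in_words)
    then show ?thesis
      using aut unfolding is_aut2_def by (auto intro: bij_betw_trans)
  qed
  moreover have "(swapab \<circ> ?t \<circ> swapab) w = ?k w" if "w \<in> words 2" for w
    using k[of "swapab w"] ss[OF that] by simp
  ultimately have "is_aut2 (swapab B) (swapab A)"
    unfolding is_aut2_def using bij_betw_cong by blast
  moreover have "invert_a (?k (invert_a w)) = ?k (invert_a (?k w))" if "w \<in> words 2" for w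
  proof -
    have "invert_a (?k (invert_a (swapab u))) = ?k (invert_a (?k (swapab u)))" if "u \<in> words 2" for u
      using braid[OF that] by (simp only: a k)
    then show ?thesis using ss[OF that] swapab_in_words[OF that] by metis
  qed
  ultimately have "swapab B = gen_inv 0 \<and> swapab A = gen 1"
    using braid_relation_invert_a_unique swapab_in_words AB by blast
  then show ?thesis
    using ss[OF AB(1)] ss[OF AB(2)] by (auto simp: swapab_eq swap_gen_def)
qed

section \<open>Local braid representations with B free of a\<close>

lemma reduced_one_gen: "reduced w \<Longrightarrow> \<forall>x \<in> set w. fst x = g \<Longrightarrow> \<exists>e. w = replicate (length w) (g, e)"
proof (induction w)
  case (Cons x w)
  show ?case
  proof (cases w)
    case (Cons y r)
    obtain e where e: "w = replicate (length w) (g, e)"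
      using Cons.IH Cons.prems reduced_ConsD by auto
    with Cons have "y = (g, e)" by (cases "length w") auto
    with Cons.prems Cons have "x = (g, e)" by (cases x) (auto simp: cancels_def)
    with e show ?thesis by (metis length_Cons replicate_Suc)
  qed (use Cons.prems in \<open>cases x; auto\<close>)
qed simp

lemma is_aut2_second_without_a:
  assumes AB: "A \<in> words 2" "B \<in> words 2" and aut: "is_aut2 A B" and no_a: "\<forall>x \<in> set B. fst x \<noteq> 0"
  shows "B = gen 1 \<or> B = gen_inv 1"
proof -
  let ?t = "subst (sub2 A B)"
  have onto: "\<exists>X \<in> words 2. ?t X = u" if "u \<in> words 2" for u
  proof -
    have "u \<in> ?t ` words 2"
      using aut that by (simp add: is_aut2_def bij_betw_def)
    then show ?thesis by blast
  qed
  have "\<forall>x \<in> set B. fst x = 1"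
    using AB(2) no_a by (force simp: words_def less_2_cases_iff)
  then obtain e where e: "B = replicate (length B) (1, e)"
    using reduced_one_gen[of B 1] AB(2) by (auto simp: words_def)
  have B0: "magnus [0] B = 0"
    using no_a by (rule magnus1_notin)
  obtain X where "X \<in> words 2" "?t X = gen 0"
    using onto[of "gen 0"] by auto
  then have "magnus [0] X * magnus [0] A = 1"
    using magnus1_subst_sub2[of X 0 A B] B0 by simp
  then have A0: "magnus [0] A \<noteq> 0" by auto
  obtain Y where Y: "Y \<in> words 2" "?t Y = gen 1"
    using onto[of "gen 1"] by auto
  then have "magnus [0] Y * magnus [0] A = 0"
    using magnus1_subst_sub2[of Y 0 A B] B0 by simp
  with A0 have "magnus [0] Y = 0" by simp
  with Y have "magnus [1] Y * magnus [1] B = 1"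
    using magnus1_subst_sub2[of Y 1 A B] by simp
  then have "\<bar>magnus [1] B\<bar> = 1"
    using zmult_eq_1_iff by (metis abs_1 abs_neg_one mult.commute)
  then have "length B = 1"
    using magnus1_replicate[of 1 "length B" e] e by (auto split: if_splits)
  with e show ?thesis by (cases e) (auto simp: numeral_eq_Suc)
qed

lemma local_braid_rep_upper:
  assumes rep: "local_braid_rep A B C D" and B: "B = shift U" and w: "w \<in> words 2"
  shows "subst (sub2 U (gen 1)) (subst (sub2 C D) (subst (sub2 U (gen 1)) w))
       = subst (sub2 C D) (subst (sub2 U (gen 1)) (subst (sub2 C D) w))"
proof -
  have "(\<lambda>g. s1 A B (Suc g)) = (\<lambda>g. shift (sub2 U (gen 1) g))"
    using B by (auto simp: fun_eq_iff s1_def sub2_def shift_def)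
  then have s1: "subst (s1 A B) (shift v) = shift (subst (sub2 U (gen 1)) v)" for v
    by (simp only: subst_shift shift_subst)
  have "(\<lambda>g. s2 C D (Suc g)) = (\<lambda>g. shift (sub2 C D g))"
    by (auto simp: fun_eq_iff s2_def sub2_def)
  then have s2: "subst (s2 C D) (shift v) = shift (subst (sub2 C D) v)" for v
    by (simp only: subst_shift shift_subst)
  have "shift w \<in> words 3"
    using shift_in_words[OF w] by (simp add: numeral_eq_Suc)
  then have "subst (s1 A B) (subst (s2 C D) (subst (s1 A B) (shift w)))
      = subst (s2 C D) (subst (s1 A B) (subst (s2 C D) (shift w)))"
    using rep unfolding local_braid_rep_def by blast
  then show ?thesis
    by (simp add: s1 s2 inj_eq[OF inj_shift])
qed

lemma local_braid_rep_lower: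
  assumes rep: "local_braid_rep A B C D" and V: "shift C = V" "V \<in> words 2" and w: "w \<in> words 2"
  shows "subst (sub2 A B) (subst (sub2 (gen 0) V) (subst (sub2 A B) w))
       = subst (sub2 (gen 0) V) (subst (sub2 A B) (subst (sub2 (gen 0) V) w))"
proof -
  have AB: "A \<in> words 2" "B \<in> words 2"
    using rep by (simp_all add: local_braid_rep_def)
  have s1: "subst (s1 A B) v = subst (sub2 A B) v" if "v \<in> words 2" for v
    using that by (intro subst_cong) (auto simp: words_def s1_def sub2_def)
  have s2: "subst (s2 C D) v = subst (sub2 (gen 0) V) v" if "v \<in> words 2" for v
    using that V(1) by (intro subst_cong) (auto simp: words_def s2_def sub2_def)
  have "w \<in> words 3"
    using w by (rule words_mono) simp
  then have "subst (s1 A B) (subst (s2 C D) (subst (s1 A B) w))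
      = subst (s2 C D) (subst (s1 A B) (subst (s2 C D) w))"
    using rep unfolding local_braid_rep_def by blast
  then show ?thesis
    using w AB V(2) by (simp add: s1 s2 subst_sub2_in_words)
qed

lemma is_aut2_idempotent:
  assumes UV: "U \<in> words 2" "V \<in> words 2" and aut: "is_aut2 U V"
    and idem: "\<And>w. w \<in> words 2 \<Longrightarrow> subst (sub2 U V) (subst (sub2 U V) w) = subst (sub2 U V) w"
  shows "U = gen 0 \<and> V = gen 1"
proof -
  have "subst (sub2 U V) w = w" if "w \<in> words 2" for w
    using aut idem[OF that] that UV
    by (auto simp: is_aut2_def bij_betw_def subst_sub2_in_words dest: inj_onD)
  from this[of "gen 0"] this[of "gen 1"] show ?thesis
    using UV by (simp add: sub2_def words_red)
qed

lemma local_braid_rep_b: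
  assumes rep: "local_braid_rep A B C D" and B: "B = gen 1"
  shows "(A, B, C, D) = (gen 0, gen 1, gen 0, gen 1)"
proof -
  have words: "A \<in> words 2" "B \<in> words 2" "C \<in> words 2" "D \<in> words 2"
    and aut: "is_aut2 A B" "is_aut2 C D"
    using rep by (simp_all add: local_braid_rep_def)
  have "C = gen 0 \<and> D = gen 1"
  proof (rule is_aut2_idempotent[OF words(3,4) aut(2)])
    fix w :: word
    assume w: "w \<in> words 2"
    have B0: "B = shift (gen 0)"
      using B by (simp add: shift_def)
    show "subst (sub2 C D) (subst (sub2 C D) w) = subst (sub2 C D) w"
      using local_braid_rep_upper[OF rep B0 w] subst_sub2_gens[OF w]
        subst_sub2_gens[OF subst_sub2_in_words[OF words(3,4)]] by simp
  qed
  moreover have "A = gen 0"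
  proof -
    have "A = gen 0 \<and> B = gen 1"
    proof (rule is_aut2_idempotent[OF words(1,2) aut(1)])
      fix w :: word
      assume w: "w \<in> words 2"
      have C1: "shift C = gen 1"
        using \<open>C = gen 0 \<and> D = gen 1\<close> by (simp add: shift_def)
      show "subst (sub2 A B) (subst (sub2 A B) w) = subst (sub2 A B) w"
        using local_braid_rep_lower[OF rep C1 _ w] subst_sub2_gens[OF w]
          subst_sub2_gens[OF subst_sub2_in_words[OF words(1,2)]] by simp
    qed
    then show ?thesis ..
  qed
  ultimately show ?thesis using B by simp
qed

lemma local_braid_rep_b_inv:
  assumes rep: "local_braid_rep A B C D" and B: "B = gen_inv 1"
  shows "(A, B, C, D) = (gen 0, gen_inv 1, gen_inv 0, gen 1)"
proof -
  have words: "A \<in> words 2" "B \<in> words 2" "C \<in> words 2" "D \<in> words 2"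
    and aut: "is_aut2 A B" "is_aut2 C D"
    using rep by (simp_all add: local_braid_rep_def)
  have CD: "C = gen_inv 0 \<and> D = gen 1"
    using braid_relation_invert_a_unique[OF words(3,4) aut(2)]
      local_braid_rep_upper[OF rep, of "gen_inv 0"] B by (simp add: shift_def)
  have "A = gen 0 \<and> B = gen_inv 1"
    using braid_relation_invert_b_unique[OF words(1,2) aut(1)]
      local_braid_rep_lower[OF rep, of "gen_inv 1"] CD by (simp add: shift_def)
  with CD show ?thesis by simp
qed

theorem proposition2p3:
  fixes A B C D :: word
  assumes "local_braid_rep A B C D"
    and "\<forall>l \<in> set B. fst l \<noteq> 0"
  shows "equiv_nat_sym (A, B, C, D) ([(0, False)], [(1, False)], [(0, False)], [(1, False)])
       \<or> equiv_nat_sym (A, B, C, D) ([(0, False)], [(1, True)], [(0, True)], [(1, False)])"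
proof -
  have "A \<in> words 2" "B \<in> words 2" "is_aut2 A B"
    using assms(1) by (simp_all add: local_braid_rep_def)
  then have "B = gen 1 \<or> B = gen_inv 1"
    using assms(2) by (rule is_aut2_second_without_a)
  then have "(A, B, C, D) = (gen 0, gen 1, gen 0, gen 1) \<or> (A, B, C, D) = (gen 0, gen_inv 1, gen_inv 0, gen 1)"
    using local_braid_rep_b local_braid_rep_b_inv assms(1) by blast
  then show ?thesis
    unfolding equiv_nat_sym_def by auto
qed

end
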